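(* Let $k$ be an integer with $9\le k\le 17$. For every $k$-uniform hypergraph $H=(V,E)$ with $m=|E|$, \[100\,\tau(H) \le 9.5976\,n_1 + 14.8298\,n_2 + 16.1586\,n_3 + 16.6667\,n_{\ge 4} + 16.6667\,m.\]
   Context: A hypergraph $H=(V,E)$ consists of a finite vertex set $V$ and a finite collection $E$ of subsets of $V$ (edges); it is $k$-uniform if every edge has exactly $k$ vertices. The degree of a vertex $v$ is the number of edges containing $v$. For $i\ge 1$, $n_i$ denotes the number of vertices of degree exactly $i$, and $n_{\ge i}=\sum_{j\ge i} n_j$. A transversal is a vertex set meeting every edge; $\tau(H)$ is the minimum size of a transversal. *)

theory Defs
  imports Complex_Main "HOL-Library.Multiset"
begin

definition hypergraph :: "'a set \<Rightarrow> 'a set multiset \<Rightarrow> bool" where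
  "hypergraph V E \<longleftrightarrow> finite V \<and> (\<forall>e\<in>#E. e \<subseteq> V)"

definition uniform :: "nat \<Rightarrow> 'a set multiset \<Rightarrow> bool" where
  "uniform k E \<longleftrightarrow> (\<forall>e\<in>#E. card e = k)"

definition hdegree :: "'a set multiset \<Rightarrow> 'a \<Rightarrow> nat" where
  "hdegree E v = size (filter_mset (\<lambda>e. v \<in> e) E)"

definition n_deg :: "'a set \<Rightarrow> 'a set multiset \<Rightarrow> nat \<Rightarrow> nat" where
  "n_deg V E i = card {v \<in> V. hdegree E v = i}"

definition n_deg_ge :: "'a set \<Rightarrow> 'a set multiset \<Rightarrow> nat \<Rightarrow> nat" where
  "n_deg_ge V E i = card {v \<in> V. hdegree E v \<ge> i}"

definition transversal :: "'a set \<Rightarrow> 'a set multiset \<Rightarrow> 'a set \<Rightarrow> bool" where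
  "transversal V E T \<longleftrightarrow> T \<subseteq> V \<and> (\<forall>e\<in>#E. T \<inter> e \<noteq> {})"

definition tau :: "'a set \<Rightarrow> 'a set multiset \<Rightarrow> nat" where
  "tau V E = Min (card ` {T. transversal V E T})"

end

theory Submission
  imports Defs
begin

text \<open>
  Shrinking every edge to 9 of its vertices keeps the number of edges, can only lower degrees and
  turns transversals of the new hypergraph into transversals of the old one, so it suffices to treat
  9-uniform hypergraphs. For these we show that the potential
  \<open>\<Phi>(H) = \<Sigma>\<^sub>v W(deg v) + 16.6667 |E|\<close> drops by at least 100 per vertex when one
  vertex, or a suitable pair of vertices, is put into the transversal and all edges through them are
  deleted; induction on the number of edges then gives \<open>100 \<tau>(H) \<le> \<Phi>(H)\<close>.

  The deletion is found at a vertex \<open>v\<close> of maximum degree \<open>D\<close>. A linear lower bound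
  \<open>W d - W (d - t) \<ge> \<alpha> t\<close> already makes deleting \<open>v\<close> almost profitable enough; any
  neighbour of \<open>v\<close> of smaller degree or codegree at least 2, and any edge leaving the closed
  neighbourhood of \<open>v\<close>, provides the missing excess. If none exists, the closed neighbourhood
  is a union of components in which every vertex has degree \<open>D\<close> and it has \<open>8D + 1\<close>
  vertices, so double counting gives \<open>9 | D (8D + 1)\<close>, which fails for \<open>D = 3, 4\<close>;
  for the other values of \<open>D\<close> deleting \<open>v\<close> alone suffices.
\<close>

section \<open>Degrees and codegrees\<close>

definition avoiding :: "'a set multiset \<Rightarrow> 'a set \<Rightarrow> 'a set multiset" where
  "avoiding E U = filter_mset (\<lambda>e. e \<inter> U = {}) E"

definition codegree :: "'a set multiset \<Rightarrow> 'a \<Rightarrow> 'a \<Rightarrow> nat" where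
  "codegree E u x = size (filter_mset (\<lambda>e. u \<in> e \<and> x \<in> e) E)"

lemma avoiding_avoiding: "avoiding (avoiding E U) U' = avoiding E (U \<union> U')"
  unfolding avoiding_def filter_filter_mset by (rule filter_mset_cong0) auto

lemma size_avoiding_less: "e \<in># E \<Longrightarrow> e \<inter> U \<noteq> {} \<Longrightarrow> size (avoiding E U) < size E"
  unfolding avoiding_def by (rule size_filter_unsat_elem)

lemma hypergraph_avoiding: "hypergraph V E \<Longrightarrow> hypergraph V (avoiding E U)"
  unfolding hypergraph_def avoiding_def by auto

lemma uniform_avoiding: "uniform k E \<Longrightarrow> uniform k (avoiding E U)"
  unfolding uniform_def avoiding_def by auto

lemma hdegree_eq_avoiding_plus_codegree:
  "hdegree E x = hdegree (avoiding E {u}) x + codegree E u x"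
  unfolding hdegree_def avoiding_def codegree_def by (induction E) auto

lemma hdegree_avoiding: "hdegree (avoiding E {u}) x = hdegree E x - codegree E u x"
  using hdegree_eq_avoiding_plus_codegree[of E x u] by simp

lemma size_avoiding: "size E = size (avoiding E {u}) + hdegree E u"
  unfolding hdegree_def avoiding_def by (induction E) auto

lemma codegree_le_hdegree: "codegree E u x \<le> hdegree E x"
  using hdegree_eq_avoiding_plus_codegree[of E x u] by simp

lemma codegree_commute: "codegree E u x = codegree E x u"
  unfolding codegree_def by (meson filter_mset_cong0)

lemma codegree_self: "codegree E u u = hdegree E u"
  unfolding hdegree_def codegree_def by simp

lemma hdegree_pos_iff: "0 < hdegree E u \<longleftrightarrow> (\<exists>e\<in>#E. u \<in> e)"
  unfolding hdegree_def nonempty_has_size[symmetric] by auto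

lemma codegree_eq_hdegree_filter: "codegree E u x = hdegree (filter_mset (\<lambda>e. u \<in> e) E) x"
  unfolding codegree_def hdegree_def filter_filter_mset by (rule filter_mset_cong0[THEN arg_cong]) auto

lemma codegree_pos: "f \<in># E \<Longrightarrow> u \<in> f \<Longrightarrow> x \<in> f \<Longrightarrow> 0 < codegree E u x"
  unfolding codegree_eq_hdegree_filter hdegree_pos_iff by auto

lemma sum_hdegree:
  assumes "hypergraph V E" "uniform k E"
  shows "(\<Sum>x\<in>V. hdegree E x) = k * size E"
  using assms
proof (induction E)
  case empty
  then show ?case by (simp add: hdegree_def)
next
  case (add f E)
  have fin: "finite V" and f: "f \<subseteq> V" "card f = k"
    using add.prems by (auto simp: hypergraph_def uniform_def)
  have IH: "(\<Sum>x\<in>V. hdegree E x) = k * size E"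
    using add.IH add.prems by (simp add: hypergraph_def uniform_def)
  have "(\<Sum>x\<in>V. hdegree (add_mset f E) x) = (\<Sum>x\<in>V. of_bool (x \<in> f) + hdegree E x)"
    by (intro sum.cong) (auto simp: hdegree_def)
  also have "\<dots> = card (V \<inter> {x. x \<in> f}) + (\<Sum>x\<in>V. hdegree E x)"
    using fin by (simp add: sum.distrib)
  also have "\<dots> = k + k * size E"
    using f IH by (simp add: Int_absorb1 Collect_mem_eq)
  finally show ?case
    by simp
qed

lemma sum_codegree:
  assumes "hypergraph V E" "uniform k E"
  shows "(\<Sum>x\<in>V. codegree E u x) = k * hdegree E u"
proof -
  let ?F = "filter_mset (\<lambda>e. u \<in> e) E"
  have "hypergraph V ?F" "uniform k ?F"
    using assms by (auto simp: hypergraph_def uniform_def)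
  then have "(\<Sum>x\<in>V. hdegree ?F x) = k * size ?F"
    by (rule sum_hdegree)
  then show ?thesis
    unfolding codegree_eq_hdegree_filter by (simp add: hdegree_def)
qed

lemma sum_hdegree_closed:
  assumes "finite S" "uniform k E" and closed: "\<forall>e\<in>#E. e \<inter> S \<noteq> {} \<longrightarrow> e \<subseteq> S"
  shows "(\<Sum>x\<in>S. hdegree E x) = k * size (filter_mset (\<lambda>e. e \<inter> S \<noteq> {}) E)"
proof -
  let ?F = "filter_mset (\<lambda>e. e \<inter> S \<noteq> {}) E"
  have "hypergraph S ?F" "uniform k ?F"
    using assms by (auto simp: hypergraph_def uniform_def)
  then have "(\<Sum>x\<in>S. hdegree ?F x) = k * size ?F"
    by (rule sum_hdegree)
  moreover have "hdegree E x = hdegree ?F x" if "x \<in> S" for x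
    unfolding hdegree_def filter_filter_mset using that
    by (intro arg_cong[where f = size] filter_mset_cong0) auto
  ultimately show ?thesis
    by simp
qed

lemma card_closed_neighbourhood:
  assumes "hypergraph V E" "uniform k E" "v \<in> V"
    and deg: "hdegree E v = D" "1 \<le> D"
    and simple: "\<forall>y\<in>V - {v}. codegree E v y \<le> 1"
  shows "card {y \<in> V. 0 < codegree E v y} = (k - 1) * D + 1"
proof -
  let ?S = "{y \<in> V. 0 < codegree E v y}"
  have finS: "finite ?S" using assms(1) by (simp add: hypergraph_def)
  have vS: "v \<in> ?S" using assms(3) deg by (simp add: codegree_self)
  have ones: "codegree E v y = 1" if "y \<in> ?S - {v}" for y
  proof -
    have "0 < codegree E v y" "codegree E v y \<le> 1"
      using that simple by auto
    then show ?thesis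
      by linarith
  qed
  have sum_ones: "(\<Sum>y\<in>?S - {v}. codegree E v y) = card (?S - {v})"
  proof -
    have "(\<Sum>y\<in>?S - {v}. codegree E v y) = (\<Sum>y\<in>?S - {v}. 1)"
      by (rule sum.cong[OF refl]) (rule ones)
    then show ?thesis
      by simp
  qed
  have "k * D = (\<Sum>y\<in>V. codegree E v y)"
    using sum_codegree[OF assms(1,2)] deg by simp
  also have "\<dots> = (\<Sum>y\<in>?S. codegree E v y)"
    using finS assms(1) by (intro sum.mono_neutral_right) (auto simp: hypergraph_def)
  also have "\<dots> = codegree E v v + (\<Sum>y\<in>?S - {v}. codegree E v y)"
    using finS vS by (rule sum.remove)
  also have "\<dots> = D + card (?S - {v})"
    using sum_ones deg by (simp add: codegree_self)
  finally have "k * D = D + card (?S - {v})" .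
  then have "card (?S - {v}) = (k - 1) * D"
    by (simp add: diff_mult_distrib)
  moreover have "card ?S = card (?S - {v}) + 1"
    using card.remove[OF finS vS] by simp
  ultimately show ?thesis
    by simp
qed

lemma closed_regular_neighbourhood_dvd:
  assumes "hypergraph V E" "uniform k E" "v \<in> V"
    and deg: "hdegree E v = D" "1 \<le> D"
    and simple: "\<forall>y\<in>V - {v}. codegree E v y \<le> 1"
    and regular: "\<forall>y\<in>V. 0 < codegree E v y \<longrightarrow> hdegree E y = D"
    and closed: "\<forall>e\<in>#E. e \<inter> {y \<in> V. 0 < codegree E v y} \<noteq> {} \<longrightarrow>
                   e \<subseteq> {y \<in> V. 0 < codegree E v y}"
  shows "k dvd D * ((k - 1) * D + 1)"
proof -
  let ?S = "{y \<in> V. 0 < codegree E v y}"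
  have "finite ?S" using assms(1) by (simp add: hypergraph_def)
  then have "(\<Sum>y\<in>?S. hdegree E y) = k * size (filter_mset (\<lambda>e. e \<inter> ?S \<noteq> {}) E)"
    using sum_hdegree_closed assms(2) closed by blast
  moreover have "(\<Sum>y\<in>?S. hdegree E y) = D * card ?S"
    using regular by simp
  ultimately have "D * card ?S = k * size (filter_mset (\<lambda>e. e \<inter> ?S \<noteq> {}) E)"
    by simp
  then show ?thesis
    using card_closed_neighbourhood[OF assms(1-3) deg simple] by (simp add: dvd_def)
qed

lemma exists_max_degree_vertex:
  assumes "hypergraph V E" "e \<in># E" "e \<noteq> {}"
  obtains v where "v \<in> V" "0 < hdegree E v" "\<forall>x\<in>V. hdegree E x \<le> hdegree E v"
proof -
  have finV: "finite V" and "e \<subseteq> V"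
    using assms(1,2) by (auto simp: hypergraph_def)
  obtain x where "x \<in> e"
    using assms(3) by auto
  then have x: "x \<in> V" "0 < hdegree E x"
    using \<open>e \<subseteq> V\<close> assms(2) by (auto simp: hdegree_pos_iff)
  have "Max (hdegree E ` V) \<in> hdegree E ` V"
    using finV x(1) by (intro Max_in) auto
  then obtain v where v: "v \<in> V" "hdegree E v = Max (hdegree E ` V)"
    by auto
  then have max: "\<forall>y\<in>V. hdegree E y \<le> hdegree E v"
    using finV by simp
  then have "0 < hdegree E v"
    using x by (simp add: order.strict_trans2)
  then show ?thesis
    using that v(1) max by simp
qed

section \<open>Transversals from a decreasing potential\<close>

lemma transversal_bound_by_potential:
  fixes P :: "'a set multiset \<Rightarrow> real" and C :: real
  assumes "0 \<le> C" and nonneg: "\<And>F. Q F \<Longrightarrow> 0 \<le> P F"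
    and closed: "\<And>F U. Q F \<Longrightarrow> Q (avoiding F U)"
    and deletion: "\<And>F. Q F \<Longrightarrow> F \<noteq> {#} \<Longrightarrow> \<exists>U\<subseteq>V. finite U \<and> (\<exists>e\<in>#F. e \<inter> U \<noteq> {})
                     \<and> C * card U \<le> P F - P (avoiding F U)"
    and "Q E"
  shows "\<exists>T. transversal V E T \<and> finite T \<and> C * card T \<le> P E"
  using \<open>Q E\<close>
proof (induction "size E" arbitrary: E rule: less_induct)
  case less
  show ?case
  proof (cases "E = {#}")
    case True
    then show ?thesis
      using nonneg[OF less.prems] by (intro exI[of _ "{}"]) (simp add: transversal_def)
  next
    case False
    then obtain U e where U: "U \<subseteq> V" "finite U" "e \<in># E" "e \<inter> U \<noteq> {}"
      and gain: "C * card U \<le> P E - P (avoiding E U)"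
      using deletion[OF less.prems] by blast
    obtain T where T: "transversal V (avoiding E U) T" "finite T"
      and bound: "C * card T \<le> P (avoiding E U)"
      using less.hyps[OF size_avoiding_less[OF U(3,4)] closed[OF less.prems]] by blast
    have "transversal V E (T \<union> U)"
      using T(1) U(1) unfolding transversal_def avoiding_def by auto
    moreover have "C * card (T \<union> U) \<le> C * card T + C * card U"
      using card_Un_le[of T U] \<open>0 \<le> C\<close> by (simp add: mult_left_mono flip: distrib_left)
    ultimately show ?thesis
      using T(2) U(2) bound gain by (intro exI[of _ "T \<union> U"]) auto
  qed
qed

lemma tau_le_card: "finite V \<Longrightarrow> transversal V E T \<Longrightarrow> tau V E \<le> card T"
  unfolding tau_def
  by (rule Min_le) (auto intro: finite_subset[of _ "card ` Pow V"] simp: transversal_def)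

lemma uniform_shrinking:
  assumes "hypergraph V E" "uniform k E" "j \<le> k"
  obtains F where "hypergraph V F" "uniform j F" "size F = size E"
    "\<And>x. hdegree F x \<le> hdegree E x" "\<And>T. transversal V F T \<Longrightarrow> transversal V E T"
proof -
  define shrink where "shrink e = (SOME s. s \<subseteq> e \<and> card s = j)" for e :: "'a set"
  have shrink: "shrink e \<subseteq> e \<and> card (shrink e) = j" if "e \<in># E" for e
  proof -
    have "j \<le> card e" using assms(2,3) that by (simp add: uniform_def)
    then have "\<exists>s. s \<subseteq> e \<and> card s = j" by (meson obtain_subset_with_card_n)
    then show ?thesis unfolding shrink_def by (rule someI_ex)
  qed
  let ?F = "image_mset shrink E"
  have "hypergraph V ?F" "uniform j ?F"
    using assms(1) shrink by (fastforce simp: hypergraph_def uniform_def)+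
  moreover have "hdegree ?F x \<le> hdegree E x" for x
    unfolding hdegree_def filter_mset_image_mset size_image_mset
    by (intro size_mset_mono filter_mset_mono_strong) (use shrink in auto)
  moreover have "transversal V E T" if "transversal V ?F T" for T
    using that shrink unfolding transversal_def by fastforce
  ultimately show ?thesis using that by simp
qed

section \<open>Degree-weighted potentials\<close>

locale degree_weighting =
  fixes V :: "'a set" and k :: nat and w :: "nat \<Rightarrow> real" and c :: real
  assumes w_zero: "w 0 = 0"
begin

definition potential :: "'a set multiset \<Rightarrow> real" where
  "potential E = (\<Sum>x\<in>V. w (hdegree E x)) + c * size E"

definition gain :: "'a set multiset \<Rightarrow> 'a set \<Rightarrow> real" where
  "gain E U = potential E - potential (avoiding E U)"

definition good_deletion :: "real \<Rightarrow> 'a set multiset \<Rightarrow> 'a set \<Rightarrow> bool" where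
  "good_deletion C E U \<longleftrightarrow> U \<subseteq> V \<and> finite U \<and> (\<exists>e\<in>#E. e \<inter> U \<noteq> {}) \<and> C * card U \<le> gain E U"

definition excess :: "real \<Rightarrow> nat \<Rightarrow> nat \<Rightarrow> real" where
  "excess \<alpha> d t = w d - w (d - t) - \<alpha> * t"

text \<open>The gain of deleting a vertex of maximum degree \<open>D\<close> when every other vertex only
  contributes the linear part \<open>\<alpha> t\<close> of its loss.\<close>

definition base_gain :: "real \<Rightarrow> nat \<Rightarrow> real" where
  "base_gain \<alpha> D = c * D + \<alpha> * (real k - 1) * D + w D"

lemma gain_singleton:
  assumes "finite V"
  shows "gain E {u} = c * hdegree E u + (\<Sum>x\<in>V. w (hdegree E x) - w (hdegree E x - codegree E u x))"
proof -
  have "real (size E) = real (size (avoiding E {u})) + real (hdegree E u)"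
    using size_avoiding[of E u] by simp
  moreover have "(\<Sum>x\<in>V. w (hdegree E x)) - (\<Sum>x\<in>V. w (hdegree (avoiding E {u}) x))
      = (\<Sum>x\<in>V. w (hdegree E x) - w (hdegree E x - codegree E u x))"
    by (simp add: sum_subtractf hdegree_avoiding)
  ultimately show ?thesis
    unfolding gain_def potential_def by (simp add: algebra_simps)
qed

lemma gain_pair: "gain E {u, y} = gain E {u} + gain (avoiding E {u}) {y}"
  unfolding gain_def avoiding_avoiding by (simp add: insert_commute)

lemma gain_lower_bound:
  assumes "hypergraph V E" "uniform k E" and maxdeg: "\<forall>x\<in>V. hdegree E x \<le> D"
    and slope: "\<And>d t. d \<le> D \<Longrightarrow> t \<le> d \<Longrightarrow> 0 \<le> excess \<alpha> d t"
    and u: "u \<in> V" "hdegree E u = D" and S: "S \<subseteq> V - {u}"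
  shows "base_gain \<alpha> D + (\<Sum>y\<in>S. excess \<alpha> (hdegree E y) (codegree E u y)) \<le> gain E {u}"
proof -
  let ?ex = "\<lambda>x. excess \<alpha> (hdegree E x) (codegree E u x)"
  have finV: "finite V"
    using assms(1) by (simp add: hypergraph_def)
  have "gain E {u} = c * D + (\<Sum>x\<in>V. \<alpha> * codegree E u x + ?ex x)"
    using gain_singleton[OF finV] u(2) by (simp add: excess_def)
  also have "\<dots> = c * D + \<alpha> * real (\<Sum>x\<in>V. codegree E u x) + (\<Sum>x\<in>V. ?ex x)"
    by (simp add: sum.distrib sum_distrib_left)
  also have "\<dots> = c * D + \<alpha> * k * D + ?ex u + (\<Sum>x\<in>V - {u}. ?ex x)"
    using sum_codegree[OF assms(1,2)] u sum.remove[OF finV u(1), of ?ex] by simp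
  also have "\<dots> = base_gain \<alpha> D + (\<Sum>x\<in>V - {u}. ?ex x)"
    using u(2) by (simp add: excess_def base_gain_def codegree_self w_zero algebra_simps)
  finally have gain: "gain E {u} = base_gain \<alpha> D + (\<Sum>x\<in>V - {u}. ?ex x)" .
  have "0 \<le> ?ex x" if "x \<in> V" for x
    using maxdeg that by (intro slope codegree_le_hdegree) auto
  then have "(\<Sum>y\<in>S. ?ex y) \<le> (\<Sum>x\<in>V - {u}. ?ex x)"
    using S finV by (intro sum_mono2) auto
  then show ?thesis
    using gain by simp
qed

lemma good_deletion_singleton:
  assumes "u \<in> V" "0 < hdegree E u" "C \<le> gain E {u}"
  shows "good_deletion C E {u}"
  using assms unfolding good_deletion_def hdegree_pos_iff by auto

lemma good_deletion_pair:
  assumes "u \<in> V" "y \<in> V" "u \<noteq> y" "0 < hdegree E u" "2 * C \<le> gain E {u, y}"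
  shows "good_deletion C E {u, y}"
  using assms unfolding good_deletion_def hdegree_pos_iff by auto

lemma max_degree_vertex_good_deletion:
  assumes "hypergraph V E" "uniform k E" "\<forall>x\<in>V. hdegree E x \<le> D"
    and slope: "\<And>d t. d \<le> D \<Longrightarrow> t \<le> d \<Longrightarrow> 0 \<le> excess \<alpha> d t"
    and v: "v \<in> V" "hdegree E v = D" "1 \<le> D" and bound: "C \<le> base_gain \<alpha> D"
  shows "good_deletion C E {v}"
proof -
  have "base_gain \<alpha> D \<le> gain E {v}"
    using gain_lower_bound[OF assms(1-3) slope v(1,2), of "{}"] by simp
  then show ?thesis
    using v bound by (intro good_deletion_singleton) auto
qed

context
  fixes \<alpha> \<beta> C :: real and D :: nat
  assumes slope: "\<And>d t. d \<le> D \<Longrightarrow> t \<le> d \<Longrightarrow> 0 \<le> excess \<alpha> d t"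
    and excess_bound: "\<And>d t. d \<le> D \<Longrightarrow> 0 < t \<Longrightarrow> t \<le> d \<Longrightarrow> d < D \<or> 2 \<le> t \<Longrightarrow> \<beta> \<le> excess \<alpha> d t"
    and single_bound: "C \<le> base_gain \<alpha> D + \<beta>"
    and double_bound: "2 * C \<le> 2 * base_gain \<alpha> D + \<beta>"
begin

lemma rigid_neighbour_or_good_deletion:
  assumes H: "hypergraph V E" "uniform k E" and maxdeg: "\<forall>x\<in>V. hdegree E x \<le> D"
    and u: "u \<in> V" "hdegree E u = D" and y: "y \<in> V" "y \<noteq> u" "0 < codegree E u y"
  shows "good_deletion C E {u} \<or> (hdegree E y = D \<and> codegree E u y = 1)"
proof (rule disjCI)
  assume "\<not> (hdegree E y = D \<and> codegree E u y = 1)"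
  moreover have "codegree E u y \<le> hdegree E y" "hdegree E y \<le> D"
    using codegree_le_hdegree maxdeg y(1) by auto
  ultimately have "\<beta> \<le> excess \<alpha> (hdegree E y) (codegree E u y)"
    using y(3) by (intro excess_bound) auto
  moreover have "base_gain \<alpha> D + excess \<alpha> (hdegree E y) (codegree E u y) \<le> gain E {u}"
    using gain_lower_bound[OF H maxdeg slope u, of "{y}"] y by simp
  moreover have "0 < hdegree E u"
    using y(3) codegree_le_hdegree[of E y u] by (simp add: codegree_commute)
  ultimately show "good_deletion C E {u}"
    using u(1) single_bound by (intro good_deletion_singleton) auto
qed

lemma outside_pair_good_deletion:
  assumes H: "hypergraph V E" "uniform k E" and maxdeg: "\<forall>x\<in>V. hdegree E x \<le> D"
    and v: "v \<in> V" "hdegree E v = D" "1 \<le> D"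
    and f: "f \<in># E" "v \<notin> f" "z \<in> f" "y \<in> f" "y \<noteq> z"
    and z: "hdegree E z = D" "codegree E v z = 1" and y: "hdegree E y = D" "codegree E v y = 0"
  shows "good_deletion C E {v, y}"
proof -
  define E' where "E' = avoiding E {v}"
  have H': "hypergraph V E'" "uniform k E'"
    unfolding E'_def using H by (auto intro: hypergraph_avoiding uniform_avoiding)
  have maxdeg': "\<forall>x\<in>V. hdegree E' x \<le> D"
    unfolding E'_def using maxdeg by (simp add: hdegree_avoiding le_diff_conv trans_le_add1)
  have yD: "hdegree E' y = D" and zD: "hdegree E' z = D - 1"
    unfolding E'_def using y z by (simp_all add: hdegree_avoiding)
  have zV: "z \<in> V" and yV: "y \<in> V"
    using H(1) f by (auto simp: hypergraph_def)
  have "f \<in># E'"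
    unfolding E'_def avoiding_def using f by simp
  then have "0 < codegree E' y z"
    using f by (intro codegree_pos)
  moreover have "codegree E' y z \<le> D - 1"
    using zD codegree_le_hdegree[of E' y z] by simp
  ultimately have "\<beta> \<le> excess \<alpha> (hdegree E' z) (codegree E' y z)"
    using zD v(3) by (intro excess_bound) auto
  then have "base_gain \<alpha> D + \<beta> \<le> gain E' {y}"
    using gain_lower_bound[OF H' maxdeg' slope yV yD, of "{z}"] zV f(5) by simp
  moreover have "base_gain \<alpha> D \<le> gain E {v}"
    using gain_lower_bound[OF H maxdeg slope v(1,2), of "{}"] by simp
  ultimately have "2 * C \<le> gain E {v, y}"
    unfolding gain_pair E'_def[symmetric] using double_bound by simp
  moreover have "v \<noteq> y"
    using f by auto
  ultimately show ?thesis
    using v yV by (intro good_deletion_pair) auto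
qed

lemma outside_neighbour_good_deletion:
  assumes H: "hypergraph V E" "uniform k E" and maxdeg: "\<forall>x\<in>V. hdegree E x \<le> D"
    and v: "v \<in> V" "hdegree E v = D"
    and f: "f \<in># E" "v \<notin> f" "z \<in> f" "y \<in> f"
    and z: "hdegree E z = D" "codegree E v z = 1" and y: "codegree E v y = 0"
  shows "\<exists>U. good_deletion C E U"
proof -
  have zV: "z \<in> V" and yV: "y \<in> V"
    using H(1) f by (auto simp: hypergraph_def)
  have "y \<noteq> z" and D: "1 \<le> D"
    using y z codegree_le_hdegree[of E v z] by auto
  show ?thesis
  proof (cases "hdegree E y < D")
    case True
    then show ?thesis
      using rigid_neighbour_or_good_deletion[OF H maxdeg zV z(1) yV \<open>y \<noteq> z\<close>]
        codegree_pos[OF f(1,3,4)] by auto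
  next
    case False
    then have "hdegree E y = D"
      using maxdeg yV by (meson antisym not_less)
    then show ?thesis
      using outside_pair_good_deletion[OF H maxdeg v D f \<open>y \<noteq> z\<close> z _ y] by blast
  qed
qed

lemma max_degree_good_deletion:
  assumes H: "hypergraph V E" "uniform k E" and maxdeg: "\<forall>x\<in>V. hdegree E x \<le> D"
    and v: "v \<in> V" "hdegree E v = D" "1 \<le> D"
    and indivisible: "\<not> k dvd D * ((k - 1) * D + 1)"
  shows "\<exists>U. good_deletion C E U"
proof (rule ccontr)
  assume none: "\<nexists>U. good_deletion C E U"
  let ?S = "{y \<in> V. 0 < codegree E v y}"
  have rigid: "hdegree E y = D \<and> codegree E v y = 1"
    if "y \<in> V" "y \<noteq> v" "0 < codegree E v y" for y
    using rigid_neighbour_or_good_deletion[OF H maxdeg v(1,2) that] none by auto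
  have closed: "\<forall>e\<in>#E. e \<inter> ?S \<noteq> {} \<longrightarrow> e \<subseteq> ?S"
  proof (intro ballI impI subsetI)
    fix f y
    assume f: "f \<in># E" "f \<inter> ?S \<noteq> {}" and "y \<in> f"
    then have yV: "y \<in> V"
      using H(1) by (auto simp: hypergraph_def)
    show "y \<in> ?S"
    proof (cases "v \<in> f")
      case True
      then show ?thesis
        using codegree_pos[OF f(1) True \<open>y \<in> f\<close>] yV by simp
    next
      case False
      obtain z where "z \<in> f" "z \<in> ?S"
        using f(2) by blast
      then have "hdegree E z = D" "codegree E v z = 1"
        using rigid False by auto
      then show ?thesis
        using outside_neighbour_good_deletion[OF H maxdeg v(1,2) f(1) False \<open>z \<in> f\<close> \<open>y \<in> f\<close>]
          none yV by auto
    qed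
  qed
  have "\<forall>y\<in>V - {v}. codegree E v y \<le> 1"
  proof
    fix y
    assume "y \<in> V - {v}"
    then show "codegree E v y \<le> 1"
      using rigid[of y] by (cases "0 < codegree E v y") auto
  qed
  moreover have "\<forall>y\<in>V. 0 < codegree E v y \<longrightarrow> hdegree E y = D"
    using rigid v(2) by auto
  ultimately show False
    using closed_regular_neighbourhood_dvd[OF H v(1-3)] closed indivisible by blast
qed

end

end

section \<open>The weights of the theorem\<close>

definition W :: "nat \<Rightarrow> real" where
  "W d = (if d = 0 then 0 else if d = 1 then 9.5976 else if d = 2 then 14.8298
     else if d = 3 then 16.1586 else 16.6667)"

text \<open>The edge weight is 16.6667, written as a fraction so that the unfolded definitions
  match simp-normal numerals.\<close>

global_interpretation W: degree_weighting V 9 W "166667 / 10000" for V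
  by unfold_locales (simp add: W_def)

lemma W_mono: "a \<le> b \<Longrightarrow> W a \<le> W b"
  by (auto simp: W_def)

lemma W_nonneg: "0 \<le> W d"
  by (auto simp: W_def)

lemma le_4_cases: "(d::nat) \<le> 4 \<Longrightarrow> d = 0 \<or> d = 1 \<or> d = 2 \<or> d = 3 \<or> d = 4"
  by auto

lemma W_slope_1:
  assumes "d \<le> 1" "t \<le> d"
  shows "0 \<le> W.excess 9.5976 d t"
proof -
  have d4: "d \<le> 4" and t4: "t \<le> 4"
    using assms by linarith+
  show ?thesis
    using le_4_cases[OF d4] le_4_cases[OF t4] assms
    by (elim disjE) (simp_all add: W.excess_def W_def)
qed

lemma W_slope_2:
  assumes "d \<le> 2" "t \<le> d"
  shows "0 \<le> W.excess 5.2322 d t"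
proof -
  have d4: "d \<le> 4" and t4: "t \<le> 4"
    using assms by linarith+
  show ?thesis
    using le_4_cases[OF d4] le_4_cases[OF t4] assms
    by (elim disjE) (simp_all add: W.excess_def W_def)
qed

lemma W_slope_3:
  assumes "d \<le> 3" "t \<le> d"
  shows "0 \<le> W.excess 1.3288 d t"
proof -
  have d4: "d \<le> 4" and t4: "t \<le> 4"
    using assms by linarith+
  show ?thesis
    using le_4_cases[OF d4] le_4_cases[OF t4] assms
    by (elim disjE) (simp_all add: W.excess_def W_def)
qed

lemma W_excess_bound_3:
  assumes "d \<le> 3" "0 < t" "t \<le> d" "d < 3 \<or> 2 \<le> t"
  shows "3.9034 \<le> W.excess 1.3288 d t"
proof -
  have d4: "d \<le> 4" and t4: "t \<le> 4"
    using assms by linarith+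
  show ?thesis
    using le_4_cases[OF d4] le_4_cases[OF t4] assms
    by (elim disjE) (simp_all add: W.excess_def W_def)
qed

lemma W_slope_4:
  assumes "d \<le> 4" "t \<le> d"
  shows "0 \<le> W.excess 0.5081 d t"
proof -
  have d4: "d \<le> 4" and t4: "t \<le> 4"
    using assms by linarith+
  show ?thesis
    using le_4_cases[OF d4] le_4_cases[OF t4] assms
    by (elim disjE) (simp_all add: W.excess_def W_def)
qed

lemma W_excess_bound_4:
  assumes "d \<le> 4" "0 < t" "t \<le> d" "d < 4 \<or> 2 \<le> t"
  shows "0.8207 \<le> W.excess 0.5081 d t"
proof -
  have d4: "d \<le> 4" and t4: "t \<le> 4"
    using assms by linarith+
  show ?thesis
    using le_4_cases[OF d4] le_4_cases[OF t4] assms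
    by (elim disjE) (simp_all add: W.excess_def W_def)
qed

lemma W_good_deletion:
  assumes H: "hypergraph V E" "uniform 9 E" and "E \<noteq> {#}"
  shows "\<exists>U. W.good_deletion V 100 E U"
proof -
  obtain e where e: "e \<in># E"
    using assms(3) by blast
  moreover have "e \<noteq> {}"
    using e H(2) by (auto simp: uniform_def)
  ultimately obtain v where v: "v \<in> V" "0 < hdegree E v"
    and maxdeg: "\<forall>x\<in>V. hdegree E x \<le> hdegree E v"
    by (rule exists_max_degree_vertex[OF H(1)])
  define D where "D = hdegree E v"
  have D: "hdegree E v = D" "1 \<le> D" and maxdeg: "\<forall>x\<in>V. hdegree E x \<le> D"
    using v maxdeg by (auto simp: D_def)
  consider "5 \<le> D" | "D = 4" | "D = 3" | "D = 2" | "D = 1"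
    using D(2) by linarith
  then show ?thesis
  proof cases
    case 1
    then have "W D = 16.6667" "5 \<le> real D"
      by (simp_all add: W_def)
    then have "100 \<le> W.base_gain 0 D"
      by (simp add: W.base_gain_def)
    then have "W.good_deletion V 100 E {v}"
      using W.max_degree_vertex_good_deletion[where \<alpha> = 0 and C = 100, OF H maxdeg _ v(1) D]
      by (simp add: W.excess_def W_mono)
    then show ?thesis ..
  next
    case 2
    show ?thesis
    proof (rule W.max_degree_good_deletion[where \<alpha> = "0.5081" and \<beta> = "0.8207" and D = 4])
      show "\<And>d t. d \<le> 4 \<Longrightarrow> t \<le> d \<Longrightarrow> 0 \<le> W.excess 0.5081 d t"
        by (rule W_slope_4)
      show "\<And>d t. d \<le> 4 \<Longrightarrow> 0 < t \<Longrightarrow> t \<le> d \<Longrightarrow> d < 4 \<or> 2 \<le> t \<Longrightarrow>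
          0.8207 \<le> W.excess 0.5081 d t"
        by (rule W_excess_bound_4)
      show "100 \<le> W.base_gain 0.5081 4 + 0.8207" "2 * 100 \<le> 2 * W.base_gain 0.5081 4 + 0.8207"
        by (simp_all add: W.base_gain_def W_def)
    qed (use H maxdeg v D 2 in auto)
  next
    case 3
    show ?thesis
    proof (rule W.max_degree_good_deletion[where \<alpha> = "1.3288" and \<beta> = "3.9034" and D = 3])
      show "\<And>d t. d \<le> 3 \<Longrightarrow> t \<le> d \<Longrightarrow> 0 \<le> W.excess 1.3288 d t"
        by (rule W_slope_3)
      show "\<And>d t. d \<le> 3 \<Longrightarrow> 0 < t \<Longrightarrow> t \<le> d \<Longrightarrow> d < 3 \<or> 2 \<le> t \<Longrightarrow>
          3.9034 \<le> W.excess 1.3288 d t"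
        by (rule W_excess_bound_3)
      show "100 \<le> W.base_gain 1.3288 3 + 3.9034" "2 * 100 \<le> 2 * W.base_gain 1.3288 3 + 3.9034"
        by (simp_all add: W.base_gain_def W_def)
    qed (use H maxdeg v D 3 in auto)
  next
    case 4
    then have "W.good_deletion V 100 E {v}"
      using W.max_degree_vertex_good_deletion[where C = 100, OF H maxdeg[unfolded 4] W_slope_2 v(1)
          D[unfolded 4]]
      by (simp add: W.base_gain_def W_def)
    then show ?thesis ..
  next
    case 5
    then have "W.good_deletion V 100 E {v}"
      using W.max_degree_vertex_good_deletion[where C = 100, OF H maxdeg[unfolded 5] W_slope_1 v(1)
          D[unfolded 5]]
      by (simp add: W.base_gain_def W_def)
    then show ?thesis ..
  qed
qed

lemma W_potential_eq:
  assumes "finite V"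
  shows "W.potential V E = 9.5976 * real (n_deg V E 1) + 14.8298 * real (n_deg V E 2)
    + 16.1586 * real (n_deg V E 3) + 16.6667 * real (n_deg_ge V E 4) + 16.6667 * real (size E)"
proof -
  have W_split: "W d = 9.5976 * of_bool (d = 1) + 14.8298 * of_bool (d = 2)
      + 16.1586 * of_bool (d = 3) + 16.6667 * of_bool (4 \<le> d)" for d
    by (simp add: W_def)
  have card: "real (card {x \<in> V. P x}) = (\<Sum>x\<in>V. of_bool (P x))" for P
    using assms by (simp add: Collect_conj_eq Int_commute)
  show ?thesis
    unfolding W.potential_def n_deg_def n_deg_ge_def card W_split
    by (simp add: sum.distrib sum_distrib_left)
qed

lemma W_potential_mono:
  assumes "\<And>x. hdegree F x \<le> hdegree E x" "size F = size E"
  shows "W.potential V F \<le> W.potential V E"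
  unfolding W.potential_def using assms by (simp add: sum_mono W_mono)

lemma W_potential_nonneg: "0 \<le> W.potential V E"
  unfolding W.potential_def by (simp add: sum_nonneg W_nonneg)

theorem mainTheorem5:
  fixes k :: nat and V :: "'a set" and E :: "'a set multiset"
  assumes "9 \<le> k" and "k \<le> 17"
    and "hypergraph V E" and "uniform k E"
  shows "100 * real (tau V E) \<le>
      9.5976 * real (n_deg V E 1) + 14.8298 * real (n_deg V E 2)
    + 16.1586 * real (n_deg V E 3) + 16.6667 * real (n_deg_ge V E 4)
    + 16.6667 * real (size E)"
proof -
  have finV: "finite V"
    using assms(3) by (simp add: hypergraph_def)
  obtain F where F: "hypergraph V F" "uniform 9 F" "size F = size E"
    and deg: "\<And>x. hdegree F x \<le> hdegree E x"
    and trans: "\<And>T. transversal V F T \<Longrightarrow> transversal V E T"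
    using uniform_shrinking[OF assms(3,4,1)] by blast
  have "\<exists>T. transversal V F T \<and> finite T \<and> 100 * real (card T) \<le> W.potential V F"
    by (rule transversal_bound_by_potential[where Q = "\<lambda>F. hypergraph V F \<and> uniform 9 F"])
      (use F W_good_deletion in \<open>auto simp: W_potential_nonneg hypergraph_avoiding
        uniform_avoiding W.good_deletion_def W.gain_def\<close>)
  then obtain T where T: "transversal V E T" "100 * real (card T) \<le> W.potential V F"
    using trans by blast
  have "real (tau V E) \<le> card T"
    using tau_le_card[OF finV T(1)] by simp
  also have "100 * \<dots> \<le> W.potential V E"
    using T(2) W_potential_mono[OF deg F(3), where V = V] by simp
  finally show ?thesis
    using W_potential_eq[OF finV] by simp
qed

end
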